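(* Let $F$ be an infinite field, let $V$ and $W$ be vector spaces over $F$, and let $n$ and $m_1,\dots,m_n$ be positive integers. Suppose that $m_i$-linear maps $f_i:V^{m_i}\to W$ ($i=1,\dots,n$) are such that for each $x\in V$ at least one of the elements $f_1(x,\dots,x),\dots,f_n(x,\dots,x)$ is $0$. Then there exists $i\in\{1,\dots,n\}$ such that $f_i(x,\dots,x)=0$ for every $x\in V$. *)

theory Defs
  imports Complex_Main
begin

text \<open>An m-linear map V^m \<rightarrow> W is represented as a function on lists of vectors;
  only its values on lists of length m matter.\<close>

definition multilinear ::
  "('f::field \<Rightarrow> 'v::ab_group_add \<Rightarrow> 'v) \<Rightarrow> ('f \<Rightarrow> 'w::ab_group_add \<Rightarrow> 'w)
     \<Rightarrow> nat \<Rightarrow> ('v list \<Rightarrow> 'w) \<Rightarrow> bool" where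
  "multilinear sV sW m f \<longleftrightarrow>
     (\<forall>xs. length xs = m \<longrightarrow>
        (\<forall>i<m. Vector_Spaces.linear sV sW (\<lambda>y. f (xs[i := y]))))"

definition diag :: "nat \<Rightarrow> ('v list \<Rightarrow> 'w) \<Rightarrow> 'v \<Rightarrow> 'w" where
  "diag m f x = f (replicate m x)"

end

theory Submission
  imports Defs "HOL-Computational_Algebra.Polynomial"
begin

text \<open>Along a line \<open>t \<mapsto> y + t d\<close> the diagonal value of an m-linear map is a polynomial
  in \<open>t\<close> with coefficients in W, so unless it vanishes on the whole line it has only finitely
  many zeros there. Given a point where f_1, ..., f_k are all nonzero and a point where f_(k+1)
  is nonzero, the line through them meets the zero sets of f_1, ..., f_(k+1) in finitely many
  points each; as F is infinite, some point of the line avoids all of them.\<close>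

lemma (in vector_space) exists_linear_functional_nonzero:
  assumes "w \<noteq> 0"
  obtains \<phi> where "Vector_Spaces.linear scale (*) \<phi>" and "\<phi> w \<noteq> 0"
proof -
  have ind: "independent {w}"
    using assms by (intro independent_insertI) (auto simp: span_empty independent_empty)
  define B where "B = extend_basis {w}"
  have B: "independent B" "span B = UNIV" "w \<in> B"
    using independent_extend_basis[OF ind] span_extend_basis[OF ind] extend_basis_superset[OF ind]
    by (auto simp: B_def)
  show ?thesis
    using that[OF linear_representation[OF B(1,2), of w]] representation_basis[OF B(1,3)] by simp
qed

text \<open>Testing against linear functionals spares us coefficient vectors in W: a nonzero value
  of the curve is detected by some functional, which turns the curve into a nonzero polynomial.\<close>

definition weakly_polynomial :: "('f::field \<Rightarrow> 'w::ab_group_add \<Rightarrow> 'w) \<Rightarrow> ('f \<Rightarrow> 'w) \<Rightarrow> bool" where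
  "weakly_polynomial sW h \<longleftrightarrow>
     (\<forall>\<phi>. Vector_Spaces.linear sW (*) \<phi> \<longrightarrow> (\<exists>p. \<forall>t. \<phi> (h t) = poly p t))"

lemma weakly_polynomial_const: "weakly_polynomial sW (\<lambda>t. c)"
  unfolding weakly_polynomial_def by (metis poly_pCons poly_0 mult_zero_right add_0_right)

lemma weakly_polynomial_add_scale:
  fixes sW :: "'f::field \<Rightarrow> 'w::ab_group_add \<Rightarrow> 'w"
  assumes "weakly_polynomial sW g" and "weakly_polynomial sW h"
  shows "weakly_polynomial sW (\<lambda>t. g t + sW t (h t))"
  unfolding weakly_polynomial_def
proof (intro allI impI)
  fix \<phi> :: "'w \<Rightarrow> 'f"
  assume lin: "Vector_Spaces.linear sW (*) \<phi>"
  then have hom: "module_hom sW (*) \<phi>"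
    by (rule module_hom_linearI)
  obtain p q where "\<And>t. \<phi> (g t) = poly p t" and "\<And>t. \<phi> (h t) = poly q t"
    using assms lin unfolding weakly_polynomial_def by metis
  then have "\<phi> (g t + sW t (h t)) = poly (p + [:0, 1:] * q) t" for t
    using module_hom.add[OF hom] module_hom.scale[OF hom] by simp
  then show "\<exists>r. \<forall>t. \<phi> (g t + sW t (h t)) = poly r t" by blast
qed

lemma weakly_polynomial_finite_zeros:
  assumes "vector_space sW" and "weakly_polynomial sW h" and "h t\<^sub>0 \<noteq> 0"
  shows "finite {t. h t = 0}"
proof -
  obtain \<phi> where lin: "Vector_Spaces.linear sW (*) \<phi>" and "\<phi> (h t\<^sub>0) \<noteq> 0"
    using vector_space.exists_linear_functional_nonzero[OF assms(1,3)] by blast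
  moreover obtain p where p: "\<And>t. \<phi> (h t) = poly p t"
    using assms(2) lin unfolding weakly_polynomial_def by blast
  ultimately have "p \<noteq> 0" by auto
  have "\<phi> 0 = 0"
    using module_hom.zero[OF module_hom_linearI[OF lin]] .
  then have "{t. h t = 0} \<subseteq> {t. poly p t = 0}"
    by (auto simp flip: p)
  then show ?thesis
    using poly_roots_finite[OF \<open>p \<noteq> 0\<close>] finite_subset by blast
qed

lemma multilinear_linear_hd:
  assumes "multilinear sV sW (Suc m) f" and "length xs = m"
  shows "Vector_Spaces.linear sV sW (\<lambda>x. f (x # xs))"
proof -
  have "length (undefined # xs) = Suc m"
    using assms(2) by simp
  with assms(1) have "Vector_Spaces.linear sV sW (\<lambda>y. f ((undefined # xs)[0 := y]))"
    unfolding multilinear_def by blast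
  then show ?thesis by simp
qed

lemma multilinear_Cons:
  fixes f :: "'v::ab_group_add list \<Rightarrow> 'w::ab_group_add"
  assumes "multilinear sV sW (Suc m) f"
  shows "multilinear sV sW m (\<lambda>xs. f (x # xs))"
  unfolding multilinear_def
proof (intro allI impI)
  fix xs :: "'v list" and i
  assume "length xs = m" and "i < m"
  then have "length (x # xs) = Suc m" and "Suc i < Suc m"
    by simp_all
  with assms have "Vector_Spaces.linear sV sW (\<lambda>y. f ((x # xs)[Suc i := y]))"
    unfolding multilinear_def by blast
  then show "Vector_Spaces.linear sV sW (\<lambda>y. f (x # xs[i := y]))"
    by simp
qed

lemma multilinear_diag_weakly_polynomial_on_line:
  assumes "multilinear sV sW m f"
  shows "weakly_polynomial sW (\<lambda>t. diag m f (y + sV t d))"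
  using assms
proof (induction m arbitrary: f)
  case 0
  show ?case
    unfolding diag_def by (simp add: weakly_polynomial_const)
next
  case (Suc m)
  let ?line = "\<lambda>t. replicate m (y + sV t d)"
  have split: "diag (Suc m) f (y + sV t d) =
      diag m (\<lambda>xs. f (y # xs)) (y + sV t d) + sW t (diag m (\<lambda>xs. f (d # xs)) (y + sV t d))" for t
  proof -
    have hom: "module_hom sV sW (\<lambda>x. f (x # ?line t))"
      using module_hom_linearI[OF multilinear_linear_hd[OF Suc.prems length_replicate]] .
    have "f ((y + sV t d) # ?line t) = f (y # ?line t) + sW t (f (d # ?line t))"
      using module_hom.add[OF hom, of y "sV t d"] module_hom.scale[OF hom, of t d] by simp
    then show ?thesis
      by (simp add: diag_def)
  qed
  show ?case
    unfolding split
    by (intro weakly_polynomial_add_scale Suc.IH multilinear_Cons[OF Suc.prems])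
qed

lemma multilinear_diag_finite_zeros_on_line:
  assumes "vector_space sW" and "multilinear sV sW m f" and "diag m f (y + sV t\<^sub>0 d) \<noteq> 0"
  shows "finite {t. diag m f (y + sV t d) = 0}"
  using weakly_polynomial_finite_zeros[OF assms(1) multilinear_diag_weakly_polynomial_on_line[OF assms(2)]]
    assms(3) by blast

lemma multilinear_diags_common_nonzero:
  assumes "infinite (UNIV :: 'f set)"
    and "vector_space (sV :: 'f::field \<Rightarrow> 'v::ab_group_add \<Rightarrow> 'v)" and "vector_space sW"
    and "finite I"
    and "\<forall>i\<in>I. multilinear sV sW (m i) (f i)"
    and "\<forall>i\<in>I. \<exists>x. diag (m i) (f i) x \<noteq> 0"
  shows "\<exists>y. \<forall>i\<in>I. diag (m i) (f i) y \<noteq> 0"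
  using assms(4-6)
proof (induction I rule: finite_induct)
  case empty
  show ?case by simp
next
  case (insert j I)
  then obtain y where y: "\<forall>i\<in>I. diag (m i) (f i) y \<noteq> 0" by auto
  obtain x where x: "diag (m j) (f j) x \<noteq> 0" using insert.prems by blast
  define d where "d = x - y"
  interpret V: vector_space sV by fact
  have at0: "y + sV 0 d = y" and at1: "y + sV 1 d = x"
    by (simp_all add: d_def)
  have "finite {t. diag (m i) (f i) (y + sV t d) = 0}" if "i \<in> insert j I" for i
  proof (cases "i = j")
    case True
    then show ?thesis
      using x insert.prems at1
      by (intro multilinear_diag_finite_zeros_on_line[OF assms(3), of _ _ _ _ 1]) auto
  next
    case False
    then show ?thesis
      using that y insert.prems at0
      by (intro multilinear_diag_finite_zeros_on_line[OF assms(3), of _ _ _ _ 0]) auto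
  qed
  then have "finite (\<Union>i\<in>insert j I. {t. diag (m i) (f i) (y + sV t d) = 0})"
    using insert.hyps(1) by blast
  then obtain t where "t \<notin> (\<Union>i\<in>insert j I. {t. diag (m i) (f i) (y + sV t d) = 0})"
    using ex_new_if_finite[OF assms(1)] by blast
  then show ?case by blast
qed

theorem lemma3p10:
  fixes sV :: "'f::field \<Rightarrow> 'v::ab_group_add \<Rightarrow> 'v"
    and sW :: "'f \<Rightarrow> 'w::ab_group_add \<Rightarrow> 'w"
    and n :: nat and m :: "nat \<Rightarrow> nat" and f :: "nat \<Rightarrow> 'v list \<Rightarrow> 'w"
  assumes "infinite (UNIV :: 'f set)"
    and "vector_space sV" and "vector_space sW"
    and "n \<ge> 1"
    and "\<forall>i\<in>{1..n}. m i \<ge> 1"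
    and "\<forall>i\<in>{1..n}. multilinear sV sW (m i) (f i)"
    and "\<forall>x. \<exists>i\<in>{1..n}. diag (m i) (f i) x = 0"
  shows "\<exists>i\<in>{1..n}. \<forall>x. diag (m i) (f i) x = 0"
proof (rule ccontr)
  assume "\<not> ?thesis"
  then have "\<forall>i\<in>{1..n}. \<exists>x. diag (m i) (f i) x \<noteq> 0" by blast
  then obtain y where "\<forall>i\<in>{1..n}. diag (m i) (f i) y \<noteq> 0"
    using multilinear_diags_common_nonzero[OF assms(1-3) finite_atLeastAtMost assms(6)] by blast
  with assms(7) show False by blast
qed

end
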